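(* Let $\mathcal{M}$ be a circular embedding of a connected graph $X$ on a closed orientable surface, with vertex-face transition matrix $U$, and let $\widehat C=\widehat N^T\widehat M$. Let $\mu\in(0,1)$ be an eigenvalue of $\widehat C\widehat C^T$, and choose $\theta$ with $\cos\theta=2\mu-1$. Let $E_\mu$ be the orthogonal projection onto the $\mu$-eigenspace of $\widehat C\widehat C^T$, let $P=\widehat M\widehat M^T$, and set $W=\widehat NE_\mu\widehat N^T$. Then the $e^{i\theta}$-eigenprojection of $U$ is \[\frac{1}{\sin^2\theta}\Big((\cos\theta+1)W-(e^{i\theta}+1)PW-(e^{-i\theta}+1)WP+2PWP\Big),\] and the $e^{-i\theta}$-eigenprojection of $U$ is \[\frac{1}{\sin^2\theta}\Big((\cos\theta+1)W-(e^{-i\theta}+1)PW-(e^{i\theta}+1)WP+2PWP\Big).\]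
   Context: Setting. A circular embedding is a cellular embedding in which every face is bounded by a cycle. Arcs are ordered pairs $(u,v)$ with $\{u,v\}$ an edge, and $u$ is the tail. Consistent orientation. Fix an orientation of the face boundaries such that each edge shared by two faces receives opposite directions in them. Then every arc lies in exactly one facial walk. Matrices. - $M$ is the arc-face incidence matrix ($M_{(a,b),f}=1$ iff $(a,b)$ lies in the facial walk of $f$). - $N$ is the arc-tail incidence matrix ($N_{(a,b),u}=1$ iff $a=u$). - $\widehat M,\widehat N$ are these matrices with columns scaled to unit length. - $U=(2\widehat M\widehat M^T-I)(2\widehat N\widehat N^T-I)$ is the vertex-face transition matrix. An eigenprojection is the orthogonal projection onto the corresponding eigenspace. *)

theory Defs
  imports Complex_Main
begin

definition simple_graph :: "'v set \<Rightarrow> ('v \<Rightarrow> 'v \<Rightarrow> bool) \<Rightarrow> bool" where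
  "simple_graph V adj \<longleftrightarrow> finite V \<and>
     (\<forall>u v. adj u v \<longrightarrow> u \<in> V \<and> v \<in> V \<and> adj v u \<and> u \<noteq> v)"

definition connected_graph :: "'v set \<Rightarrow> ('v \<Rightarrow> 'v \<Rightarrow> bool) \<Rightarrow> bool" where
  "connected_graph V adj \<longleftrightarrow> V \<noteq> {} \<and>
     (\<forall>u\<in>V. \<forall>v\<in>V. (u, v) \<in> {(x, y). adj x y}\<^sup>*)"

definition nbrs :: "('v \<Rightarrow> 'v \<Rightarrow> bool) \<Rightarrow> 'v \<Rightarrow> 'v set" where
  "nbrs adj u = {v. adj u v}"

text \<open>Arcs: ordered pairs (u,v) with uv an edge; u is the tail.\<close>
definition arcs :: "('v \<Rightarrow> 'v \<Rightarrow> bool) \<Rightarrow> ('v \<times> 'v) set" where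
  "arcs adj = {(u, v). adj u v}"

text \<open>A rotation system: at every vertex a cyclic permutation of its neighbours.
  (Heffter--Edmonds: these are exactly the cellular embeddings of a connected graph
  in closed orientable surfaces.)\<close>
definition rotation_system :: "'v set \<Rightarrow> ('v \<Rightarrow> 'v \<Rightarrow> bool) \<Rightarrow> ('v \<Rightarrow> 'v \<Rightarrow> 'v) \<Rightarrow> bool" where
  "rotation_system V adj \<sigma> \<longleftrightarrow>
     (\<forall>u\<in>V. bij_betw (\<sigma> u) (nbrs adj u) (nbrs adj u) \<and>
        (\<forall>x\<in>nbrs adj u. \<forall>y\<in>nbrs adj u. \<exists>n. (\<sigma> u ^^ n) x = y))"

text \<open>Face permutation: the arc following (u,v) in its (consistently oriented) facial walk.\<close>
definition face_perm :: "('v \<Rightarrow> 'v \<Rightarrow> 'v) \<Rightarrow> 'v \<times> 'v \<Rightarrow> 'v \<times> 'v" where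
  "face_perm \<sigma> = (\<lambda>(u, v). (v, \<sigma> v u))"

definition orbit :: "('a \<Rightarrow> 'a) \<Rightarrow> 'a \<Rightarrow> 'a set" where
  "orbit f x = {(f ^^ n) x | n. True}"

text \<open>Faces, each identified with the set of arcs of its facial walk.\<close>
definition faces :: "('v \<Rightarrow> 'v \<Rightarrow> bool) \<Rightarrow> ('v \<Rightarrow> 'v \<Rightarrow> 'v) \<Rightarrow> ('v \<times> 'v) set set" where
  "faces adj \<sigma> = (\<lambda>a. orbit (face_perm \<sigma>) a) ` arcs adj"

text \<open>Circular: every facial walk is a cycle (length at least 3, no repeated vertex).\<close>
definition circular :: "('v \<Rightarrow> 'v \<Rightarrow> bool) \<Rightarrow> ('v \<Rightarrow> 'v \<Rightarrow> 'v) \<Rightarrow> bool" where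
  "circular adj \<sigma> \<longleftrightarrow>
     (\<forall>a\<in>arcs adj. card (orbit (face_perm \<sigma>) a) \<ge> 3 \<and> inj_on fst (orbit (face_perm \<sigma>) a))"

definition circular_orientable_embedding ::
  "'v set \<Rightarrow> ('v \<Rightarrow> 'v \<Rightarrow> bool) \<Rightarrow> ('v \<Rightarrow> 'v \<Rightarrow> 'v) \<Rightarrow> bool" where
  "circular_orientable_embedding V adj \<sigma> \<longleftrightarrow>
     simple_graph V adj \<and> rotation_system V adj \<sigma> \<and> circular adj \<sigma>"

section \<open>Matrices over finite index sets (functions, relevant on the carriers only)\<close>

definition mmul :: "'j set \<Rightarrow> ('i \<Rightarrow> 'j \<Rightarrow> complex) \<Rightarrow> ('j \<Rightarrow> 'k \<Rightarrow> complex) \<Rightarrow> 'i \<Rightarrow> 'k \<Rightarrow> complex" where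
  "mmul J X Y = (\<lambda>i k. \<Sum>j\<in>J. X i j * Y j k)"

definition mtrans :: "('i \<Rightarrow> 'j \<Rightarrow> complex) \<Rightarrow> 'j \<Rightarrow> 'i \<Rightarrow> complex" where
  "mtrans X = (\<lambda>j i. X i j)"

definition idm :: "'i \<Rightarrow> 'i \<Rightarrow> complex" where
  "idm = (\<lambda>i j. if i = j then 1 else 0)"

definition eigenspace :: "'i set \<Rightarrow> ('i \<Rightarrow> 'i \<Rightarrow> complex) \<Rightarrow> complex \<Rightarrow> ('i \<Rightarrow> complex) set" where
  "eigenspace K X lam = {x. (\<forall>i. i \<notin> K \<longrightarrow> x i = 0) \<and> (\<forall>i\<in>K. (\<Sum>j\<in>K. X i j * x j) = lam * x i)}"

definition is_eigenvalue :: "'i set \<Rightarrow> ('i \<Rightarrow> 'i \<Rightarrow> complex) \<Rightarrow> complex \<Rightarrow> bool" where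
  "is_eigenvalue K X lam \<longleftrightarrow> (\<exists>x\<in>eigenspace K X lam. \<exists>i\<in>K. x i \<noteq> 0)"

definition cinner :: "'i set \<Rightarrow> ('i \<Rightarrow> complex) \<Rightarrow> ('i \<Rightarrow> complex) \<Rightarrow> complex" where
  "cinner K x y = (\<Sum>i\<in>K. x i * cnj (y i))"

definition is_eigenprojection ::
  "'i set \<Rightarrow> ('i \<Rightarrow> 'i \<Rightarrow> complex) \<Rightarrow> complex \<Rightarrow> ('i \<Rightarrow> 'i \<Rightarrow> complex) \<Rightarrow> bool" where
  "is_eigenprojection K X lam Pm \<longleftrightarrow>
     (\<forall>x. (\<forall>i. i \<notin> K \<longrightarrow> x i = 0) \<longrightarrow>
        (let y = (\<lambda>i. if i \<in> K then \<Sum>j\<in>K. Pm i j * x j else 0) in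
          y \<in> eigenspace K X lam \<and> (\<forall>z\<in>eigenspace K X lam. cinner K (\<lambda>i. x i - y i) z = 0)))"

definition Mhat :: "('v \<Rightarrow> 'v \<Rightarrow> bool) \<Rightarrow> ('v \<times> 'v) \<Rightarrow> ('v \<times> 'v) set \<Rightarrow> complex" where
  "Mhat adj = (\<lambda>a f. if a \<in> arcs adj \<and> a \<in> f then complex_of_real (1 / sqrt (real (card f))) else 0)"

definition Nhat :: "('v \<Rightarrow> 'v \<Rightarrow> bool) \<Rightarrow> ('v \<times> 'v) \<Rightarrow> 'v \<Rightarrow> complex" where
  "Nhat adj = (\<lambda>a u. if a \<in> arcs adj \<and> fst a = u
                      then complex_of_real (1 / sqrt (real (card (nbrs adj u)))) else 0)"

definition Pmat :: "('v \<Rightarrow> 'v \<Rightarrow> bool) \<Rightarrow> ('v \<Rightarrow> 'v \<Rightarrow> 'v) \<Rightarrow> ('v \<times> 'v) \<Rightarrow> ('v \<times> 'v) \<Rightarrow> complex" where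
  "Pmat adj \<sigma> = mmul (faces adj \<sigma>) (Mhat adj) (mtrans (Mhat adj))"

definition Umat :: "'v set \<Rightarrow> ('v \<Rightarrow> 'v \<Rightarrow> bool) \<Rightarrow> ('v \<Rightarrow> 'v \<Rightarrow> 'v) \<Rightarrow> ('v \<times> 'v) \<Rightarrow> ('v \<times> 'v) \<Rightarrow> complex" where
  "Umat V adj \<sigma> = mmul (arcs adj)
     (\<lambda>a b. 2 * Pmat adj \<sigma> a b - idm a b)
     (\<lambda>a b. 2 * mmul V (Nhat adj) (mtrans (Nhat adj)) a b - idm a b)"

definition Chat :: "('v \<Rightarrow> 'v \<Rightarrow> bool) \<Rightarrow> ('v \<Rightarrow> 'v \<Rightarrow> 'v) \<Rightarrow> 'v \<Rightarrow> ('v \<times> 'v) set \<Rightarrow> complex" where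
  "Chat adj \<sigma> = mmul (arcs adj) (mtrans (Nhat adj)) (Mhat adj)"

definition CCT :: "('v \<Rightarrow> 'v \<Rightarrow> bool) \<Rightarrow> ('v \<Rightarrow> 'v \<Rightarrow> 'v) \<Rightarrow> 'v \<Rightarrow> 'v \<Rightarrow> complex" where
  "CCT adj \<sigma> = mmul (faces adj \<sigma>) (Chat adj \<sigma>) (mtrans (Chat adj \<sigma>))"

definition Wmat :: "'v set \<Rightarrow> ('v \<Rightarrow> 'v \<Rightarrow> bool) \<Rightarrow> ('v \<Rightarrow> 'v \<Rightarrow> complex) \<Rightarrow> ('v \<times> 'v) \<Rightarrow> ('v \<times> 'v) \<Rightarrow> complex" where
  "Wmat V adj E = mmul V (mmul V (Nhat adj) E) (mtrans (Nhat adj))"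

end

theory Submission
  imports Defs
begin

text \<open>
  Since the faces partition the arcs and so do the tails, \<open>M\<close> and \<open>N\<close> (normalised) have
  orthonormal columns; hence \<open>P = M M\<^sup>T\<close> and \<open>Q = N N\<^sup>T\<close> are orthogonal projections and
  \<open>U = (2P - I)(2Q - I)\<close> is a product of two reflections, with \<open>C C\<^sup>T = N\<^sup>T P N\<close>.

  If \<open>U z = l z\<close>, applying \<open>P\<close> and \<open>Q\<close> to this identity gives \<open>2 P Q z = (1 + l) P z\<close> and
  \<open>(1 + l) Q z = 2 l Q P z\<close>; hence \<open>N\<^sup>T z\<close> is a \<open>\<mu>\<close>-eigenvector of \<open>N\<^sup>T P N\<close>, so \<open>E\<close> fixes it
  and \<open>W z = Q z\<close>. These relations show that the candidate \<open>T\<close> fixes every \<open>l\<close>-eigenvector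
  of \<open>U\<close>. Conversely \<open>Q W = W\<close> and \<open>Q P W = \<mu> W\<close> give \<open>U T = l T\<close> by direct computation,
  and \<open>T\<close> is Hermitian. A Hermitian matrix whose columns lie in an eigenspace and which fixes
  that eigenspace is the orthogonal projection onto it.
\<close>

section \<open>Matrices as functions on finite index sets\<close>

definition mvmul :: "'j set \<Rightarrow> ('i \<Rightarrow> 'j \<Rightarrow> complex) \<Rightarrow> ('j \<Rightarrow> complex) \<Rightarrow> 'i \<Rightarrow> complex" where
  "mvmul J X x = (\<lambda>i. \<Sum>j\<in>J. X i j * x j)"

lemma mmul_assoc: "mmul J (mmul K X Y) Z = mmul K X (mmul J Y Z)"
  unfolding mmul_def
  by (auto simp: fun_eq_iff sum_distrib_left sum_distrib_right mult.assoc intro: sum.swap)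

lemma mvmul_mmul: "mvmul J (mmul K X Y) x = mvmul K X (mvmul J Y x)"
  unfolding mmul_def mvmul_def
  by (auto simp: fun_eq_iff sum_distrib_left sum_distrib_right mult.assoc intro: sum.swap)

lemma mtrans_mmul: "mtrans (mmul J X Y) = mmul J (mtrans Y) (mtrans X)"
  unfolding mtrans_def mmul_def by (simp add: mult.commute)

lemma mtrans_mtrans [simp]: "mtrans (mtrans X) = X"
  unfolding mtrans_def ..

lemma mmul_add_right: "mmul J X (\<lambda>a b. Y a b + Z a b) = (\<lambda>i k. mmul J X Y i k + mmul J X Z i k)"
  unfolding mmul_def by (simp add: distrib_left sum.distrib fun_eq_iff)

lemma mmul_diff_right: "mmul J X (\<lambda>a b. Y a b - Z a b) = (\<lambda>i k. mmul J X Y i k - mmul J X Z i k)"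
  unfolding mmul_def by (simp add: right_diff_distrib sum_subtractf)

lemma mmul_scale_right: "mmul J X (\<lambda>a b. c * Y a b) = (\<lambda>i k. c * mmul J X Y i k)"
  unfolding mmul_def by (simp add: sum_distrib_left algebra_simps)

lemma mmul_scale_left: "mmul J (\<lambda>a b. c * Y a b) X = (\<lambda>i k. c * mmul J Y X i k)"
  unfolding mmul_def by (simp add: sum_distrib_left algebra_simps)

lemma mvmul_add: "mvmul J X (\<lambda>a. y a + z a) = (\<lambda>i. mvmul J X y i + mvmul J X z i)"
  unfolding mvmul_def by (simp add: distrib_left sum.distrib)

lemma mvmul_diff: "mvmul J X (\<lambda>a. y a - z a) = (\<lambda>i. mvmul J X y i - mvmul J X z i)"
  unfolding mvmul_def by (simp add: right_diff_distrib sum_subtractf)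

lemma mvmul_scale: "mvmul J X (\<lambda>a. c * y a) = (\<lambda>i. c * mvmul J X y i)"
  unfolding mvmul_def by (simp add: sum_distrib_left algebra_simps)

lemma mvmul_cong_right:
  "(\<And>j. j \<in> J \<Longrightarrow> x j = y j) \<Longrightarrow> mvmul J X x i = mvmul J X y i"
  unfolding mvmul_def by (rule sum.cong) simp_all

lemma mvmul_scaled_eq:
  assumes "\<And>j. c * x j = d * y j"
  shows "c * mvmul J X x i = d * mvmul J X y i"
proof -
  have "c * mvmul J X x i = mvmul J X (\<lambda>j. c * x j) i" by (simp add: mvmul_scale)
  also have "\<dots> = d * mvmul J X y i" by (simp add: assms mvmul_scale)
  finally show ?thesis .
qed

lemma sum_idm: "finite A \<Longrightarrow> (\<Sum>l\<in>A. idm j l * f l) = (if j \<in> A then f j else 0)"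
  by (simp add: idm_def if_distrib[where f="\<lambda>x. x * _"] cong: if_cong)

lemma mvmul_reflection:
  "finite A \<Longrightarrow> i \<in> A \<Longrightarrow> mvmul A (\<lambda>a b. 2 * X a b - idm a b) x i = 2 * mvmul A X x i - x i"
  unfolding mvmul_def
  by (simp add: left_diff_distrib sum_subtractf sum_distrib_left mult.assoc sum_idm)

lemma mmul_reflection:
  "finite A \<Longrightarrow> i \<in> A \<Longrightarrow> mmul A (\<lambda>a b. 2 * X a b - idm a b) Y i k = 2 * mmul A X Y i k - Y i k"
  using mvmul_reflection[of A i X "\<lambda>j. Y j k"] by (simp add: mmul_def mvmul_def)

lemma mmul_cong_right:
  "(\<And>j. j \<in> J \<Longrightarrow> Y j k = Y' j k) \<Longrightarrow> mmul J X Y i k = mmul J X Y' i k"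
  unfolding mmul_def by (rule sum.cong) simp_all

lemma mmul_mmul_cong_on:
  assumes "\<And>u v. u \<in> V \<Longrightarrow> v \<in> V \<Longrightarrow> G u v = G' u v"
  shows "mmul V X (mmul V G Y) = mmul V X (mmul V G' Y)"
  using assms unfolding mmul_def by (auto simp: fun_eq_iff intro!: sum.cong)

lemma mmul_idm_left: "finite V \<Longrightarrow> u \<in> V \<Longrightarrow> mmul V idm Y u b = Y u b"
  by (simp add: mmul_def sum_idm)

lemma mmul_mmul_idm:
  "finite V \<Longrightarrow> mmul V X (mmul V idm Y) = mmul V X Y"
  unfolding mmul_def[of V X] by (auto simp: fun_eq_iff mmul_idm_left intro!: sum.cong)

definition orthonormal_columns :: "'a set \<Rightarrow> 'c set \<Rightarrow> ('a \<Rightarrow> 'c \<Rightarrow> complex) \<Rightarrow> bool" where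
  "orthonormal_columns A F M \<longleftrightarrow> (\<forall>f\<in>F. \<forall>g\<in>F. mmul A (mtrans M) M f g = idm f g)"

lemma mmul_orthonormal_columns:
  "finite F \<Longrightarrow> orthonormal_columns A F M \<Longrightarrow> mmul F X (mmul F (mmul A (mtrans M) M) Y) = mmul F X Y"
  unfolding orthonormal_columns_def by (simp add: mmul_mmul_cong_on[of F _ idm] mmul_mmul_idm)

lemma orthonormal_columns_idem:
  assumes "finite F" "orthonormal_columns A F M"
  shows "mmul A (mmul F M (mtrans M)) (mmul F M (mtrans M)) = mmul F M (mtrans M)"
proof -
  have "mmul A (mmul F M (mtrans M)) (mmul F M (mtrans M))
      = mmul F M (mmul F (mmul A (mtrans M) M) (mtrans M))"
    unfolding mmul_assoc ..
  thus ?thesis unfolding mmul_orthonormal_columns[OF assms] .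
qed

section \<open>Orthogonal eigenprojections\<close>

lemma is_eigenprojectionI:
  assumes fin: "finite K"
    and columns: "\<And>i k. i \<in> K \<Longrightarrow> k \<in> K \<Longrightarrow> mmul K X T i k = lam * T i k"
    and herm: "\<And>i j. i \<in> K \<Longrightarrow> j \<in> K \<Longrightarrow> cnj (T i j) = T j i"
    and fixes_eigenspace: "\<And>z i. z \<in> eigenspace K X lam \<Longrightarrow> i \<in> K \<Longrightarrow> mvmul K T z i = z i"
  shows "is_eigenprojection K X lam T"
  unfolding is_eigenprojection_def Let_def
proof (intro allI impI conjI ballI)
  fix x :: "'a \<Rightarrow> complex"
  define y where "y = (\<lambda>i. if i \<in> K then \<Sum>j\<in>K. T i j * x j else 0)"
  have y_on: "y i = mvmul K T x i" if "i \<in> K" for i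
    using that by (simp add: y_def mvmul_def)
  show "y \<in> eigenspace K X lam"
    unfolding eigenspace_def
  proof (intro CollectI conjI allI impI ballI)
    fix i assume "i \<notin> K" thus "y i = 0" by (simp add: y_def)
  next
    fix i assume i: "i \<in> K"
    have "(\<Sum>j\<in>K. X i j * y j) = mvmul K (mmul K X T) x i"
      unfolding mvmul_mmul mvmul_def[of K X] by (rule sum.cong) (auto simp: y_on)
    also have "\<dots> = lam * mvmul K T x i"
      unfolding mvmul_def by (simp add: columns[OF i] sum_distrib_left mult.assoc)
    finally show "(\<Sum>j\<in>K. X i j * y j) = lam * y i" using y_on[OF i] by simp
  qed
  fix z assume z: "z \<in> eigenspace K X lam"
  have "(\<Sum>i\<in>K. y i * cnj (z i)) = (\<Sum>i\<in>K. \<Sum>j\<in>K. T i j * x j * cnj (z i))"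
    by (simp add: y_def sum_distrib_right)
  also have "\<dots> = (\<Sum>j\<in>K. \<Sum>i\<in>K. T i j * x j * cnj (z i))"
    by (rule sum.swap)
  also have "\<dots> = (\<Sum>j\<in>K. x j * cnj (mvmul K T z j))"
    by (rule sum.cong) (auto simp: mvmul_def sum_distrib_left herm mult_ac)
  also have "\<dots> = (\<Sum>j\<in>K. x j * cnj (z j))"
    by (rule sum.cong) (auto simp: fixes_eigenspace[OF z])
  finally show "cinner K (\<lambda>i. x i - y i) z = 0"
    by (simp add: cinner_def left_diff_distrib sum_subtractf)
qed

lemma is_eigenprojection_image:
  assumes E: "is_eigenprojection K X lam E" and x: "\<forall>i. i \<notin> K \<longrightarrow> x i = 0"
  shows "(\<lambda>i. if i \<in> K then mvmul K E x i else 0) \<in> eigenspace K X lam"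
    and "z \<in> eigenspace K X lam \<Longrightarrow>
      cinner K (\<lambda>i. x i - (if i \<in> K then mvmul K E x i else 0)) z = 0"
  using E x unfolding is_eigenprojection_def Let_def mvmul_def by blast+

lemma is_eigenprojection_column:
  assumes fin: "finite K" and E: "is_eigenprojection K X lam E" and k: "k \<in> K"
  shows "(\<lambda>i. if i \<in> K then E i k else 0) \<in> eigenspace K X lam"
proof -
  have "(\<lambda>i. if i \<in> K then mvmul K E (\<lambda>j. if j = k then 1 else 0) i else 0)
      = (\<lambda>i. if i \<in> K then E i k else 0)"
    using fin k by (auto simp: mvmul_def fun_eq_iff if_distrib[where f="\<lambda>x. _ * x"] cong: if_cong)
  thus ?thesis using is_eigenprojection_image(1)[OF E, of "\<lambda>j. if j = k then 1 else 0"] k by auto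
qed

lemma is_eigenprojection_columns:
  assumes "finite K" "is_eigenprojection K X lam E" "i \<in> K" "k \<in> K"
  shows "mmul K X E i k = lam * E i k"
proof -
  have "(\<Sum>j\<in>K. X i j * (if j \<in> K then E j k else 0)) = lam * E i k"
    using is_eigenprojection_column[OF assms(1,2,4)] assms(3) unfolding eigenspace_def by auto
  moreover have "(\<Sum>j\<in>K. X i j * (if j \<in> K then E j k else 0)) = mmul K X E i k"
    unfolding mmul_def by (rule sum.cong) auto
  ultimately show ?thesis by simp
qed

lemma is_eigenprojection_fixes:
  assumes fin: "finite K" and E: "is_eigenprojection K X lam E"
    and z: "z \<in> eigenspace K X lam" and i: "i \<in> K"
  shows "mvmul K E z i = z i"
proof -
  have z_supp: "\<forall>i. i \<notin> K \<longrightarrow> z i = 0" using z by (simp add: eigenspace_def)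
  define d where "d = (\<lambda>i. z i - (if i \<in> K then mvmul K E z i else 0))"
  have "d \<in> eigenspace K X lam"
    using z is_eigenprojection_image(1)[OF E z_supp] unfolding eigenspace_def d_def
    by (auto simp: right_diff_distrib sum_subtractf)
  hence "cinner K d d = 0" using is_eigenprojection_image(2)[OF E z_supp] by (simp add: d_def)
  hence "complex_of_real (\<Sum>j\<in>K. (cmod (d j))\<^sup>2) = 0"
    unfolding cinner_def complex_norm_square of_real_sum .
  hence "(\<Sum>j\<in>K. (cmod (d j))\<^sup>2) = 0" by (simp only: of_real_eq_0_iff)
  hence "d i = 0" using fin i by (simp add: sum_nonneg_eq_0_iff)
  thus ?thesis using i by (simp add: d_def)
qed

lemma is_eigenprojection_herm:
  assumes fin: "finite K" and E: "is_eigenprojection K X lam E"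
  shows "i \<in> K \<Longrightarrow> j \<in> K \<Longrightarrow> cnj (E i j) = E j i"
proof -
  \<comment> \<open>\<open>e i - E (e i)\<close> is orthogonal to the eigenvector \<open>E (e j)\<close>, which makes
    \<open>cnj (E i j)\<close> the entry \<open>G i j\<close> of a Gram matrix.\<close>
  define G where "G = (\<lambda>i j. \<Sum>k\<in>K. E k i * cnj (E k j))"
  have cnj_E: "cnj (E i j) = G i j" if i: "i \<in> K" and j: "j \<in> K" for i j
  proof -
    define e where "e = (\<lambda>k. if k = i then (1::complex) else 0)"
    have E_e: "mvmul K E e k = E k i" for k
      using fin i by (simp add: mvmul_def e_def if_distrib[where f="\<lambda>x. _ * x"] cong: if_cong)
    have "\<forall>k. k \<notin> K \<longrightarrow> e k = 0" using i by (simp add: e_def)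
    hence "cinner K (\<lambda>k. e k - (if k \<in> K then mvmul K E e k else 0))
        (\<lambda>k. if k \<in> K then E k j else 0) = 0"
      using is_eigenprojection_image(2)[OF E _ is_eigenprojection_column[OF fin E j]] by blast
    hence "(\<Sum>k\<in>K. e k * cnj (E k j)) - G i j = 0"
      unfolding cinner_def E_e G_def by (simp add: left_diff_distrib sum_subtractf cong: sum.cong)
    moreover have "(\<Sum>k\<in>K. e k * cnj (E k j)) = cnj (E i j)"
      using fin i by (simp add: e_def if_distrib[where f="\<lambda>x. x * _"] cong: if_cong)
    ultimately show ?thesis by simp
  qed
  have "cnj (G j i) = G i j" for i j
    unfolding G_def by (simp add: mult.commute)
  thus "i \<in> K \<Longrightarrow> j \<in> K \<Longrightarrow> cnj (E i j) = E j i"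
    using cnj_E by (metis complex_cnj_cnj)
qed

section \<open>Products of two reflections\<close>

locale two_reflections =
  fixes A :: "'a set" and V :: "'v set" and N :: "'a \<Rightarrow> 'v \<Rightarrow> complex" and P :: "'a \<Rightarrow> 'a \<Rightarrow> complex"
  assumes finite_A: "finite A" and finite_V: "finite V"
    and N_supp: "\<And>a v. v \<notin> V \<Longrightarrow> N a v = 0"
    and N_real: "\<And>a v. cnj (N a v) = N a v"
    and N_orthonormal: "orthonormal_columns A V N"
    and P_idem: "mmul A P P = P"
    and P_herm: "\<And>a b. cnj (P a b) = P b a"
begin

definition Q :: "'a \<Rightarrow> 'a \<Rightarrow> complex" where
  "Q = mmul V N (mtrans N)"

definition K :: "'v \<Rightarrow> 'v \<Rightarrow> complex" where
  "K = mmul A (mmul A (mtrans N) P) N"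

definition U :: "'a \<Rightarrow> 'a \<Rightarrow> complex" where
  "U = mmul A (\<lambda>a b. 2 * P a b - idm a b) (\<lambda>a b. 2 * Q a b - idm a b)"

lemma Q_idem: "mmul A Q Q = Q"
  unfolding Q_def using orthonormal_columns_idem[OF finite_V N_orthonormal] .

lemma mtrans_N_Q: "mmul A (mtrans N) Q = mtrans N"
proof (intro ext)
  fix v a
  show "mmul A (mtrans N) Q v a = mtrans N v a"
  proof (cases "v \<in> V")
    case True
    have "mmul A (mtrans N) Q v a = mmul V (mmul A (mtrans N) N) (mtrans N) v a"
      by (simp add: Q_def mmul_assoc)
    also have "\<dots> = mmul V idm (mtrans N) v a"
      using True N_orthonormal unfolding mmul_def[of V] orthonormal_columns_def
      by (intro sum.cong) simp_all
    also have "\<dots> = mtrans N v a"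
      using True by (simp add: mmul_idm_left finite_V)
    finally show ?thesis .
  qed (simp add: mmul_def mtrans_def N_supp)
qed

lemma eigenvector_U_expand:
  assumes z: "z \<in> eigenspace A U l" and i: "i \<in> A"
  shows "l * z i = 4 * mvmul A P (mvmul A Q z) i - 2 * mvmul A P z i - 2 * mvmul A Q z i + z i"
proof -
  have "l * z i = mvmul A U z i" using z i by (simp add: eigenspace_def mvmul_def)
  also have "\<dots> = mvmul A (\<lambda>a b. 2 * P a b - idm a b) (\<lambda>j. 2 * mvmul A Q z j - z j) i"
    unfolding U_def mvmul_mmul mvmul_def[of A "\<lambda>a b. 2 * P a b - idm a b"]
    by (intro sum.cong) (simp_all add: mvmul_reflection finite_A)
  also have "\<dots> = 2 * mvmul A P (\<lambda>j. 2 * mvmul A Q z j - z j) i - (2 * mvmul A Q z i - z i)"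
    using i by (simp add: mvmul_reflection finite_A)
  finally show ?thesis by (simp add: mvmul_diff mvmul_scale)
qed

lemma mvmul_eigenvector_U_expand:
  assumes z: "z \<in> eigenspace A U l"
  shows "mvmul A X (\<lambda>j. l * z j) i
    = 4 * mvmul A X (mvmul A P (mvmul A Q z)) i - 2 * mvmul A X (mvmul A P z) i
      - 2 * mvmul A X (mvmul A Q z) i + mvmul A X z i"
proof -
  have "mvmul A X (\<lambda>j. l * z j) i = mvmul A X (\<lambda>j. 4 * mvmul A P (mvmul A Q z) j
      - 2 * mvmul A P z j - 2 * mvmul A Q z j + z j) i"
    unfolding mvmul_def[of A X] by (intro sum.cong) (simp_all add: eigenvector_U_expand[OF z])
  thus ?thesis by (simp add: mvmul_add mvmul_diff mvmul_scale)
qed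

lemma eigenvector_U_P:
  assumes z: "z \<in> eigenspace A U l"
  shows "2 * mvmul A P (mvmul A Q z) j = (1 + l) * mvmul A P z j"
proof -
  have PP: "mvmul A P (mvmul A P y) = mvmul A P y" for y
    by (simp add: P_idem flip: mvmul_mmul)
  have "l * mvmul A P z j = mvmul A P (\<lambda>j. l * z j) j" by (simp add: mvmul_scale)
  also have "\<dots> = 2 * mvmul A P (mvmul A Q z) j - mvmul A P z j"
    unfolding mvmul_eigenvector_U_expand[OF z] PP by simp
  finally show ?thesis by (simp add: algebra_simps)
qed

lemma eigenvector_U_Q:
  assumes z: "z \<in> eigenspace A U l"
  shows "(1 + l) * mvmul A Q z j = 2 * l * mvmul A Q (mvmul A P z) j"
proof -
  have QQ: "mvmul A Q (mvmul A Q y) = mvmul A Q y" for y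
    by (simp add: Q_idem flip: mvmul_mmul)
  have QPQ: "2 * mvmul A Q (mvmul A P (mvmul A Q z)) j = (1 + l) * mvmul A Q (mvmul A P z) j"
    by (rule mvmul_scaled_eq) (rule eigenvector_U_P[OF z])
  have "l * mvmul A Q z j = mvmul A Q (\<lambda>j. l * z j) j" by (simp add: mvmul_scale)
  also have "\<dots> = 4 * mvmul A Q (mvmul A P (mvmul A Q z)) j - 2 * mvmul A Q (mvmul A P z) j
      - mvmul A Q z j"
    unfolding mvmul_eigenvector_U_expand[OF z] QQ by simp
  finally show ?thesis using QPQ by algebra
qed

lemma mvmul_mtrans_N_Q: "mvmul A (mtrans N) (mvmul A Q y) = mvmul A (mtrans N) y"
  by (simp add: mtrans_N_Q flip: mvmul_mmul)

lemma eigenvector_U_mtrans_N: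
  assumes z: "z \<in> eigenspace A U l"
  shows "(1 + l) * mvmul A (mtrans N) z v = 2 * l * mvmul A (mtrans N) (mvmul A P z) v"
proof -
  have "(1 + l) * mvmul A (mtrans N) (mvmul A Q z) v
      = 2 * l * mvmul A (mtrans N) (mvmul A Q (mvmul A P z)) v"
    by (rule mvmul_scaled_eq) (rule eigenvector_U_Q[OF z])
  thus ?thesis by (simp add: mvmul_mtrans_N_Q)
qed

lemma eigenvector_U_restrict:
  assumes z: "z \<in> eigenspace A U l"
    and l_unit: "l * cnj l = 1" and l_re: "l + cnj l = 4 * m - 2"
  shows "mvmul A (mtrans N) z \<in> eigenspace V K m"
proof -
  define u where "u = mvmul A (mtrans N) z"
  have "mvmul V K u v = m * u v" for v
  proof -
    have "mvmul V K u v = mvmul A (mtrans N) (mvmul A P (mvmul A Q z)) v"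
      by (simp add: K_def Q_def u_def mvmul_mmul)
    hence "2 * mvmul V K u v = (1 + l) * mvmul A (mtrans N) (mvmul A P z) v"
      using mvmul_scaled_eq[OF eigenvector_U_P[OF z]] by simp
    hence "4 * l * mvmul V K u v = (1 + l) * (1 + l) * u v"
      using eigenvector_U_mtrans_N[OF z, of v] unfolding u_def by algebra
    hence "4 * l * mvmul V K u v = 4 * l * (m * u v)"
      using l_unit l_re by algebra
    moreover have "l \<noteq> 0" using l_unit by auto
    ultimately show ?thesis by simp
  qed
  thus ?thesis
    unfolding eigenspace_def u_def[symmetric]
    by (auto simp: u_def mvmul_def mtrans_def N_supp)
qed

end

locale two_reflections_eigenprojection = two_reflections A V N P
  for A :: "'a set" and V :: "'v set" and N :: "'a \<Rightarrow> 'v \<Rightarrow> complex" and P :: "'a \<Rightarrow> 'a \<Rightarrow> complex" +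
  fixes \<mu> :: real and E :: "'v \<Rightarrow> 'v \<Rightarrow> complex" and l :: complex
  assumes mu_pos: "0 < \<mu>" and mu_less_one: "\<mu> < 1"
    and E_proj: "is_eigenprojection V K (complex_of_real \<mu>) E"
    and l_unit: "l * cnj l = 1" and l_re: "l + cnj l = 4 * complex_of_real \<mu> - 2"
begin

definition W :: "'a \<Rightarrow> 'a \<Rightarrow> complex" where
  "W = mmul V (mmul V N E) (mtrans N)"

definition T :: "'a \<Rightarrow> 'a \<Rightarrow> complex" where
  "T = (\<lambda>a b. (1 / complex_of_real (4 * \<mu> * (1 - \<mu>))) *
     (complex_of_real (2 * \<mu>) * W a b - (l + 1) * mmul A P W a b
      - (cnj l + 1) * mmul A W P a b + 2 * mmul A (mmul A P W) P a b))"

lemma W_eq: "W = mmul V N (mmul V E (mtrans N))"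
  by (simp add: W_def mmul_assoc)

lemma Q_W: "mmul A Q W = W"
proof -
  have "mmul A Q W = mmul V N (mmul V (mmul A (mtrans N) N) (mmul V E (mtrans N)))"
    unfolding Q_def W_eq mmul_assoc ..
  thus ?thesis unfolding mmul_orthonormal_columns[OF finite_V N_orthonormal] W_eq .
qed

lemma Q_P_W: "mmul A Q (mmul A P W) = (\<lambda>a b. complex_of_real \<mu> * W a b)"
proof -
  have "mmul A Q (mmul A P W) = mmul V N (mmul V (mmul V K E) (mtrans N))"
    unfolding Q_def K_def W_eq mmul_assoc ..
  also have "\<dots> = mmul V N (mmul V (\<lambda>u v. complex_of_real \<mu> * E u v) (mtrans N))"
    by (rule mmul_mmul_cong_on) (simp add: is_eigenprojection_columns[OF finite_V E_proj])
  finally show ?thesis by (simp add: W_eq mmul_scale_left mmul_scale_right)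
qed

lemma Q_W_P: "mmul A Q (mmul A W P) = mmul A W P"
  by (subst mmul_assoc[symmetric]) (simp only: Q_W)

lemma Q_P_W_P: "mmul A Q (mmul A (mmul A P W) P) = (\<lambda>a b. complex_of_real \<mu> * mmul A W P a b)"
  by (subst mmul_assoc[symmetric]) (simp only: Q_P_W mmul_scale_left)

lemma P_P_W: "mmul A P (mmul A P W) = mmul A P W"
  by (subst mmul_assoc[symmetric]) (simp only: P_idem)

lemma P_W_P: "mmul A P (mmul A W P) = mmul A (mmul A P W) P"
  by (simp only: mmul_assoc)

lemma P_P_W_P: "mmul A P (mmul A (mmul A P W) P) = mmul A (mmul A P W) P"
  by (subst mmul_assoc[symmetric]) (simp only: P_P_W)

lemma U_T:
  assumes i: "i \<in> A"
  shows "mmul A U T i k = l * T i k"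
proof -
  define s where "s = 1 / complex_of_real (4 * \<mu> * (1 - \<mu>))"
  define m where "m = complex_of_real \<mu>"
  note T_eq = T_def[folded s_def, unfolded of_real_mult of_real_numeral, folded m_def]
  have Q_T: "mmul A Q T = (\<lambda>a b. s * ((2 * m - (l + 1) * m) * W a b + (2 * m - cnj l - 1) * mmul A W P a b))"
    by (intro ext) (simp add: T_eq mmul_add_right mmul_diff_right mmul_scale_right Q_W Q_P_W Q_W_P Q_P_W_P
      m_def algebra_simps)
  have P_T: "mmul A P T a b = s * ((2 * m - l - 1) * mmul A P W a b + (1 - cnj l) * mmul A (mmul A P W) P a b)"
    for a b by (simp add: T_eq mmul_add_right mmul_diff_right mmul_scale_right P_P_W P_P_W_P
      P_W_P algebra_simps)
  have P_Q_T: "mmul A P (mmul A Q T) a b = s * ((2 * m - (l + 1) * m) * mmul A P W a b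
      + (2 * m - cnj l - 1) * mmul A (mmul A P W) P a b)" for a b
    by (simp add: Q_T mmul_add_right mmul_scale_right P_W_P)
  have "mmul A U T i k = mmul A (\<lambda>a b. 2 * P a b - idm a b) (\<lambda>j k. 2 * mmul A Q T j k - T j k) i k"
    unfolding U_def mmul_assoc by (rule mmul_cong_right) (simp add: mmul_reflection finite_A)
  also have "\<dots> = 4 * mmul A P (mmul A Q T) i k - 2 * mmul A P T i k - 2 * mmul A Q T i k + T i k"
    using i by (simp add: mmul_reflection finite_A mmul_diff_right mmul_scale_right)
  also have "\<dots> = l * T i k"
    unfolding P_Q_T unfolding P_T Q_T unfolding T_eq using l_unit l_re[folded m_def] by algebra
  finally show ?thesis .
qed

lemma W_herm: "cnj (W a b) = W b a"
proof -
  have E_herm: "cnj (E u v) = E v u" if "u \<in> V" "v \<in> V" for u v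
    using is_eigenprojection_herm[OF finite_V E_proj that] .
  have "cnj (W a b) = (\<Sum>u\<in>V. \<Sum>v\<in>V. N a v * E u v * N b u)"
    unfolding W_def mmul_def mtrans_def
    by (simp add: sum_distrib_right N_real E_herm cong: sum.cong)
  also have "\<dots> = (\<Sum>v\<in>V. \<Sum>u\<in>V. N a v * E u v * N b u)"
    by (rule sum.swap)
  also have "\<dots> = W b a"
    unfolding W_def mmul_def mtrans_def
    by (simp add: sum_distrib_right sum_distrib_left mult.commute mult.left_commute)
  finally show ?thesis .
qed

lemma T_herm: "cnj (T a b) = T b a"
proof -
  have P_W: "cnj (mmul A P W a b) = mmul A W P b a" for a b
    unfolding mmul_def by (simp add: P_herm W_herm mult.commute)
  have W_P: "cnj (mmul A W P a b) = mmul A P W b a" for a b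
    unfolding mmul_def by (simp add: P_herm W_herm mult.commute)
  have "cnj (mmul A (mmul A P W) P a b) = mmul A P (mmul A W P) b a"
    unfolding mmul_def[of A "mmul A P W"] mmul_def[of A P "mmul A W P"]
    by (simp add: P_herm P_W mult.commute)
  hence P_W_P: "cnj (mmul A (mmul A P W) P a b) = mmul A (mmul A P W) P b a"
    by (simp only: P_W_P)
  show ?thesis
    unfolding T_def by (simp add: W_herm P_W W_P P_W_P)
qed

lemma W_eigenvector_U:
  assumes z: "z \<in> eigenspace A U l"
  shows "mvmul A W z = mvmul A Q z"
    and "2 * l * mvmul A W (mvmul A P z) j = (1 + l) * mvmul A Q z j"
proof -
  define u where "u = mvmul A (mtrans N) z"
  have "u \<in> eigenspace V K (complex_of_real \<mu>)"
    unfolding u_def using eigenvector_U_restrict[OF z l_unit l_re] .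
  hence "mvmul V E u v = u v" if "v \<in> V" for v
    using is_eigenprojection_fixes[OF finite_V E_proj _ that] by blast
  hence N_E_u: "mvmul V N (mvmul V E u) j = mvmul A Q z j" for j
    using mvmul_cong_right[of V "mvmul V E u" u N j] by (simp add: Q_def mvmul_mmul u_def)
  show "mvmul A W z = mvmul A Q z"
    using N_E_u by (simp add: W_eq mvmul_mmul fun_eq_iff u_def)
  have "(1 + l) * mvmul V E u v = 2 * l * mvmul V E (mvmul A (mtrans N) (mvmul A P z)) v" for v
    by (rule mvmul_scaled_eq) (simp add: u_def eigenvector_U_mtrans_N[OF z])
  hence "(1 + l) * mvmul V N (mvmul V E u) j
      = 2 * l * mvmul V N (mvmul V E (mvmul A (mtrans N) (mvmul A P z))) j"
    by (rule mvmul_scaled_eq)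
  thus "2 * l * mvmul A W (mvmul A P z) j = (1 + l) * mvmul A Q z j"
    by (simp add: W_eq mvmul_mmul N_E_u)
qed

lemma T_fixes_eigenvector_U:
  assumes z: "z \<in> eigenspace A U l" and i: "i \<in> A"
  shows "mvmul A T z i = z i"
proof -
  define s where "s = 1 / complex_of_real (4 * \<mu> * (1 - \<mu>))"
  define m where "m = complex_of_real \<mu>"
  note T_eq = T_def[folded s_def, unfolded of_real_mult of_real_numeral, folded m_def]
  have "mvmul A T z i = s * (2 * m * mvmul A W z i - (l + 1) * mvmul A (mmul A P W) z i
      - (cnj l + 1) * mvmul A (mmul A W P) z i + 2 * mvmul A (mmul A (mmul A P W) P) z i)"
    unfolding T_eq mvmul_def[of A _ z]
    by (simp add: sum_distrib_left sum.distrib sum_subtractf algebra_simps)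
  hence T_z: "mvmul A T z i = s * (2 * m * mvmul A Q z i - (l + 1) * mvmul A P (mvmul A Q z) i
      - (cnj l + 1) * mvmul A W (mvmul A P z) i + 2 * mvmul A P (mvmul A W (mvmul A P z)) i)"
    by (simp only: mvmul_mmul W_eigenvector_U(1)[OF z])
  have P_W_P_z: "2 * l * mvmul A P (mvmul A W (mvmul A P z)) i = (1 + l) * mvmul A P (mvmul A Q z) i"
    by (rule mvmul_scaled_eq) (rule W_eigenvector_U(2)[OF z])
  have s_m: "s * (4 * m * (1 - m)) = 1"
    using mu_pos mu_less_one unfolding s_def m_def by (simp add: field_simps)
  have "(l - 1) * mvmul A T z i = (l - 1) * z i"
    using T_z P_W_P_z s_m eigenvector_U_expand[OF z i] eigenvector_U_P[OF z, of i]
      W_eigenvector_U(2)[OF z, of i]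
      l_unit l_re[folded m_def]
    by algebra
  moreover have "l \<noteq> 1"
    using l_re mu_less_one by auto
  ultimately show ?thesis by simp
qed

theorem T_is_eigenprojection: "is_eigenprojection A U l T"
  by (rule is_eigenprojectionI[OF finite_A U_T T_herm T_fixes_eigenvector_U])

end

section \<open>Faces of a rotation system\<close>

lemma funpow_in_self_map: "f ` S \<subseteq> S \<Longrightarrow> a \<in> S \<Longrightarrow> (f ^^ n) a \<in> S"
  by (induction n) auto

lemma funpow_inj_on_period:
  assumes fin: "finite S" and self_map: "f ` S \<subseteq> S" and inj: "inj_on f S" and a: "a \<in> S"
  obtains n where "n > 0" "(f ^^ n) a = a"
proof -
  define g where "g x = (if x \<in> S then f x else x)" for x
  have "inj g"
    using inj self_map by (auto simp: g_def inj_on_def split: if_splits)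
  have g_f: "(g ^^ n) a = (f ^^ n) a" for n
    by (induction n) (simp_all add: g_def funpow_in_self_map[OF self_map a])
  have "{y. \<exists>n. y = (g ^^ n) a} \<subseteq> S"
    using funpow_in_self_map[OF self_map a] by (auto simp: g_f)
  hence "finite {y. \<exists>n. y = (g ^^ n) a}"
    using fin finite_subset by blast
  with \<open>inj g\<close> obtain n where "n > 0" "(g ^^ n) a = a"
    by (rule funpow_inj_finite)
  thus ?thesis using that g_f by simp
qed

lemma orbit_subset: "f ` S \<subseteq> S \<Longrightarrow> a \<in> S \<Longrightarrow> orbit f a \<subseteq> S"
  unfolding orbit_def by (auto intro: funpow_in_self_map)

lemma orbit_self: "a \<in> orbit f a"
  unfolding orbit_def by (auto intro: exI[of _ 0])

lemma orbit_eq_orbit: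
  assumes fin: "finite S" and self_map: "f ` S \<subseteq> S" and inj: "inj_on f S" and a: "a \<in> S"
    and c: "c \<in> orbit f a"
  shows "orbit f c = orbit f a"
proof -
  obtain i where i: "c = (f ^^ i) a" using c by (auto simp: orbit_def)
  obtain n where n: "n > 0" "(f ^^ n) a = a"
    using funpow_inj_on_period[OF fin self_map inj a] .
  have "(f ^^ (n * i)) a = a"
    using n(2) by (induction i) (simp_all add: funpow_add)
  moreover have "n * i = (n - 1) * i + i"
    using n(1) by (cases n) simp_all
  ultimately have a_from_c: "a = (f ^^ ((n - 1) * i)) c"
    by (simp add: i funpow_add)
  show ?thesis
  proof
    show "orbit f c \<subseteq> orbit f a"
    proof
      fix x assume "x \<in> orbit f c"
      then obtain m where "x = (f ^^ m) c" by (auto simp: orbit_def)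
      hence "x = (f ^^ (m + i)) a" by (simp add: i funpow_add)
      thus "x \<in> orbit f a" by (auto simp: orbit_def)
    qed
    show "orbit f a \<subseteq> orbit f c"
    proof
      fix x assume "x \<in> orbit f a"
      then obtain m where "x = (f ^^ m) a" by (auto simp: orbit_def)
      hence "x = (f ^^ (m + (n - 1) * i)) c" using a_from_c by (simp add: funpow_add)
      thus "x \<in> orbit f c" by (auto simp: orbit_def)
    qed
  qed
qed


lemma finite_arcs: "simple_graph V adj \<Longrightarrow> finite (arcs adj)"
  unfolding simple_graph_def arcs_def
  by (rule finite_subset[of _ "V \<times> V"]) auto

lemma face_perm_arcs:
  assumes "simple_graph V adj" "rotation_system V adj \<sigma>"
  shows "face_perm \<sigma> ` arcs adj \<subseteq> arcs adj"
proof
  fix x assume "x \<in> face_perm \<sigma> ` arcs adj"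
  then obtain u v where x: "x = (v, \<sigma> v u)" and uv: "adj u v"
    by (auto simp: arcs_def face_perm_def)
  have "v \<in> V" "u \<in> nbrs adj v"
    using assms(1) uv by (auto simp: simple_graph_def nbrs_def)
  hence "\<sigma> v u \<in> nbrs adj v"
    using assms(2) by (auto simp: rotation_system_def dest: bij_betwE)
  thus "x \<in> arcs adj" by (simp add: x arcs_def nbrs_def)
qed

lemma inj_on_face_perm:
  assumes "simple_graph V adj" "rotation_system V adj \<sigma>"
  shows "inj_on (face_perm \<sigma>) (arcs adj)"
proof (rule inj_onI)
  fix x y assume "x \<in> arcs adj" "y \<in> arcs adj" "face_perm \<sigma> x = face_perm \<sigma> y"
  then obtain u u' v where xy: "x = (u, v)" "y = (u', v)" "adj u v" "adj u' v" "\<sigma> v u = \<sigma> v u'"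
    by (auto simp: arcs_def face_perm_def)
  have "v \<in> V" "u \<in> nbrs adj v" "u' \<in> nbrs adj v"
    using assms(1) xy(3,4) by (auto simp: simple_graph_def nbrs_def)
  hence "u = u'"
    using assms(2) xy(5) by (auto simp: rotation_system_def dest: bij_betw_imp_inj_on inj_onD)
  thus "x = y" using xy by simp
qed

lemma faces_subset_arcs:
  assumes "simple_graph V adj" "rotation_system V adj \<sigma>" "f \<in> faces adj \<sigma>"
  shows "f \<subseteq> arcs adj" and "f \<noteq> {}"
proof -
  obtain a where a: "a \<in> arcs adj" "f = orbit (face_perm \<sigma>) a"
    using assms(3) by (auto simp: faces_def)
  show "f \<subseteq> arcs adj" using orbit_subset[OF face_perm_arcs[OF assms(1,2)] a(1)] a(2) by simp
  show "f \<noteq> {}" using orbit_self[of a] a(2) by auto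
qed

lemma faces_disjoint:
  assumes "simple_graph V adj" "rotation_system V adj \<sigma>"
    and "f \<in> faces adj \<sigma>" "g \<in> faces adj \<sigma>" "f \<noteq> g"
  shows "f \<inter> g = {}"
proof (rule ccontr)
  obtain a b where a: "a \<in> arcs adj" "f = orbit (face_perm \<sigma>) a"
    and b: "b \<in> arcs adj" "g = orbit (face_perm \<sigma>) b"
    using assms(3,4) by (auto simp: faces_def)
  note orbit_eq = orbit_eq_orbit[OF finite_arcs[OF assms(1)] face_perm_arcs[OF assms(1,2)]
      inj_on_face_perm[OF assms(1,2)]]
  assume "f \<inter> g \<noteq> {}"
  then obtain c where "c \<in> f" "c \<in> g" by blast
  hence "f = g" using orbit_eq[OF a(1)] orbit_eq[OF b(1)] a(2) b(2) by metis
  thus False using assms(5) by simp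
qed


section \<open>The normalised incidence matrices\<close>

lemma sum_normalized_indicator:
  fixes A S :: "'a set"
  assumes "finite A" "S \<subseteq> A" "S \<noteq> {}"
  defines "c \<equiv> complex_of_real (1 / sqrt (real (card S)))"
  shows "(\<Sum>a\<in>A. (if a \<in> S then c else 0) * (if a \<in> S then c else 0)) = 1"
proof -
  have "card S > 0" using assms finite_subset card_gt_0_iff by blast
  have "(\<Sum>a\<in>A. (if a \<in> S then c else 0) * (if a \<in> S then c else 0)) = (\<Sum>a\<in>S. c * c)"
    using assms(2) by (intro sum.mono_neutral_cong_right[OF assms(1)]) auto
  also have "\<dots> = of_nat (card S) * (c * c)" by simp
  also have "\<dots> = 1"
    using \<open>card S > 0\<close> unfolding c_def by (simp add: of_real_mult[symmetric] del: of_real_mult)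
  finally show ?thesis .
qed

lemma orthonormal_columns_Mhat:
  assumes "simple_graph V adj" "rotation_system V adj \<sigma>"
  shows "orthonormal_columns (arcs adj) (faces adj \<sigma>) (Mhat adj)"
  unfolding orthonormal_columns_def
proof (intro ballI)
  fix f g assume f: "f \<in> faces adj \<sigma>" and g: "g \<in> faces adj \<sigma>"
  show "mmul (arcs adj) (mtrans (Mhat adj)) (Mhat adj) f g = idm f g"
  proof (cases "f = g")
    case True
    have "mmul (arcs adj) (mtrans (Mhat adj)) (Mhat adj) f f
        = (\<Sum>a\<in>arcs adj. (if a \<in> f then complex_of_real (1 / sqrt (real (card f))) else 0)
            * (if a \<in> f then complex_of_real (1 / sqrt (real (card f))) else 0))"
      unfolding mmul_def mtrans_def Mhat_def by (rule sum.cong) simp_all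
    thus ?thesis
      using sum_normalized_indicator[OF finite_arcs[OF assms(1)] faces_subset_arcs[OF assms f]] True
      by (simp add: idm_def)
  next
    case False
    hence "f \<inter> g = {}" by (rule faces_disjoint[OF assms f g])
    hence "Mhat adj a f * Mhat adj a g = 0" for a by (auto simp: Mhat_def)
    hence "mmul (arcs adj) (mtrans (Mhat adj)) (Mhat adj) f g = 0"
      unfolding mmul_def mtrans_def by (intro sum.neutral) blast
    thus ?thesis using False by (simp add: idm_def)
  qed
qed

lemma orthonormal_columns_Nhat:
  assumes graph: "simple_graph V adj" and nbrs: "\<And>u. u \<in> V \<Longrightarrow> nbrs adj u \<noteq> {}"
  shows "orthonormal_columns (arcs adj) V (Nhat adj)"
  unfolding orthonormal_columns_def
proof (intro ballI)
  fix u v assume u: "u \<in> V" and v: "v \<in> V"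
  show "mmul (arcs adj) (mtrans (Nhat adj)) (Nhat adj) u v = idm u v"
  proof (cases "u = v")
    case True
    define S where "S = Pair u ` nbrs adj u"
    have "finite (nbrs adj u)"
      using graph by (auto simp: simple_graph_def nbrs_def intro: finite_subset)
    hence "card S = card (nbrs adj u)"
      unfolding S_def by (simp add: card_image inj_on_def)
    moreover have "a \<in> arcs adj \<and> fst a = u \<longleftrightarrow> a \<in> S" for a
      by (auto simp: S_def arcs_def nbrs_def)
    ultimately have column: "Nhat adj a u
        = (if a \<in> S then complex_of_real (1 / sqrt (real (card S))) else 0)" for a
      by (simp add: Nhat_def)
    have "S \<subseteq> arcs adj" "S \<noteq> {}"
      using nbrs[OF u] by (auto simp: S_def arcs_def nbrs_def)
    hence "mmul (arcs adj) (mtrans (Nhat adj)) (Nhat adj) u u = 1"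
      using sum_normalized_indicator[OF finite_arcs[OF graph]]
      unfolding mmul_def mtrans_def column by simp
    thus ?thesis using True by (simp add: idm_def)
  next
    case False
    thus ?thesis unfolding mmul_def mtrans_def Nhat_def idm_def by (auto intro!: sum.neutral)
  qed
qed

lemma connected_graph_nbrs_nonempty:
  assumes graph: "simple_graph V adj" and conn: "connected_graph V adj"
    and arcs: "arcs adj \<noteq> {}" and u: "u \<in> V"
  shows "nbrs adj u \<noteq> {}"
proof -
  obtain p q where pq: "adj p q" using arcs by (auto simp: arcs_def)
  hence "p \<in> V" "q \<in> V" "p \<noteq> q" using graph by (auto simp: simple_graph_def)
  then obtain w where "w \<in> V" "w \<noteq> u" by blast
  moreover have "(u, w) \<in> {(x, y). adj x y}\<^sup>*"
    using conn u \<open>w \<in> V\<close> by (auto simp: connected_graph_def)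
  ultimately have "\<exists>y. adj u y" by (auto elim: converse_rtranclE)
  thus ?thesis by (auto simp: nbrs_def)
qed


lemma embedding_two_reflections:
  assumes graph: "simple_graph V adj" and rot: "rotation_system V adj \<sigma>"
    and nbrs: "\<And>u. u \<in> V \<Longrightarrow> nbrs adj u \<noteq> {}"
  shows "two_reflections (arcs adj) V (Nhat adj) (Pmat adj \<sigma>)"
proof
  show "finite (arcs adj)" using finite_arcs[OF graph] .
  show "finite V" using graph by (simp add: simple_graph_def)
  show "Nhat adj a v = 0" if "v \<notin> V" for a v
    using graph that by (auto simp: Nhat_def arcs_def simple_graph_def)
  show "cnj (Nhat adj a v) = Nhat adj a v" for a v
    by (simp add: Nhat_def)
  show "orthonormal_columns (arcs adj) V (Nhat adj)"
    using orthonormal_columns_Nhat[OF graph nbrs] .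
  have "finite (faces adj \<sigma>)" using finite_arcs[OF graph] by (simp add: faces_def)
  thus "mmul (arcs adj) (Pmat adj \<sigma>) (Pmat adj \<sigma>) = Pmat adj \<sigma>"
    unfolding Pmat_def using orthonormal_columns_idem orthonormal_columns_Mhat[OF graph rot] by blast
  have "cnj (Mhat adj a f) = Mhat adj a f" for a f
    by (simp add: Mhat_def)
  thus "cnj (Pmat adj \<sigma> a b) = Pmat adj \<sigma> b a" for a b
    unfolding Pmat_def mmul_def mtrans_def by (simp add: mult.commute)
qed

lemma Umat_eigenprojection:
  assumes graph: "simple_graph V adj" and rot: "rotation_system V adj \<sigma>"
    and nbrs: "\<And>u. u \<in> V \<Longrightarrow> nbrs adj u \<noteq> {}"
    and mu_range: "0 < \<mu>" "\<mu> < 1"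
    and E: "is_eigenprojection V (CCT adj \<sigma>) (complex_of_real \<mu>) E"
    and l_unit: "l * cnj l = 1" and l_re: "l + cnj l = 4 * complex_of_real \<mu> - 2"
  shows "is_eigenprojection (arcs adj) (Umat V adj \<sigma>) l
    (\<lambda>a b. (1 / complex_of_real (4 * \<mu> * (1 - \<mu>))) *
      (complex_of_real (2 * \<mu>) * Wmat V adj E a b
       - (l + 1) * mmul (arcs adj) (Pmat adj \<sigma>) (Wmat V adj E) a b
       - (cnj l + 1) * mmul (arcs adj) (Wmat V adj E) (Pmat adj \<sigma>) a b
       + 2 * mmul (arcs adj) (mmul (arcs adj) (Pmat adj \<sigma>) (Wmat V adj E)) (Pmat adj \<sigma>) a b))"
proof -
  interpret two_reflections "arcs adj" V "Nhat adj" "Pmat adj \<sigma>"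
    using embedding_two_reflections[OF graph rot nbrs] .
  have "CCT adj \<sigma> = K"
    unfolding K_def unfolding CCT_def Chat_def Pmat_def mtrans_mmul by (simp add: mmul_assoc)
  interpret two_reflections_eigenprojection "arcs adj" V "Nhat adj" "Pmat adj \<sigma>" \<mu> E l
    by unfold_locales (use mu_range E \<open>CCT adj \<sigma> = K\<close> l_unit l_re in auto)
  show ?thesis
    using T_is_eigenprojection by (simp add: T_def W_def U_def Q_def Wmat_def Umat_def)
qed

theorem corollary3p5:
  fixes V :: "'v set" and adj :: "'v \<Rightarrow> 'v \<Rightarrow> bool" and \<sigma> :: "'v \<Rightarrow> 'v \<Rightarrow> 'v"
    and \<mu> \<theta> :: real and E :: "'v \<Rightarrow> 'v \<Rightarrow> complex"
  assumes emb: "circular_orientable_embedding V adj \<sigma>"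
    and conn: "connected_graph V adj"
    and mu_range: "0 < \<mu>" "\<mu> < 1"
    and mu_eig: "is_eigenvalue V (CCT adj \<sigma>) (complex_of_real \<mu>)"
    and theta: "cos \<theta> = 2 * \<mu> - 1"
    and E: "is_eigenprojection V (CCT adj \<sigma>) (complex_of_real \<mu>) E"
  defines "A \<equiv> arcs adj"
    and "P \<equiv> Pmat adj \<sigma>"
    and "W \<equiv> Wmat V adj E"
  shows "is_eigenprojection A (Umat V adj \<sigma>) (exp (\<i> * complex_of_real \<theta>))
           (\<lambda>a b. (1 / complex_of_real ((sin \<theta>)\<^sup>2)) *
              (complex_of_real (cos \<theta> + 1) * W a b
               - (exp (\<i> * complex_of_real \<theta>) + 1) * mmul A P W a b
               - (exp (- \<i> * complex_of_real \<theta>) + 1) * mmul A W P a b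
               + 2 * mmul A (mmul A P W) P a b)) \<and>
         is_eigenprojection A (Umat V adj \<sigma>) (exp (- \<i> * complex_of_real \<theta>))
           (\<lambda>a b. (1 / complex_of_real ((sin \<theta>)\<^sup>2)) *
              (complex_of_real (cos \<theta> + 1) * W a b
               - (exp (- \<i> * complex_of_real \<theta>) + 1) * mmul A P W a b
               - (exp (\<i> * complex_of_real \<theta>) + 1) * mmul A W P a b
               + 2 * mmul A (mmul A P W) P a b))"
proof (cases "arcs adj = {}")
  case True
  thus ?thesis by (simp add: A_def is_eigenprojection_def eigenspace_def cinner_def)
next
  case False
  have graph: "simple_graph V adj" and rot: "rotation_system V adj \<sigma>"
    using emb by (simp_all add: circular_orientable_embedding_def)
  have nbrs: "nbrs adj u \<noteq> {}" if "u \<in> V" for u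
    using connected_graph_nbrs_nonempty[OF graph conn False that] .
  have eigenprojection: "is_eigenprojection (arcs adj) (Umat V adj \<sigma>) l
    (\<lambda>a b. (1 / complex_of_real (4 * \<mu> * (1 - \<mu>))) *
      (complex_of_real (2 * \<mu>) * W a b - (l + 1) * mmul A P W a b
       - (cnj l + 1) * mmul A W P a b + 2 * mmul A (mmul A P W) P a b))"
    if "l * cnj l = 1" "l + cnj l = 4 * complex_of_real \<mu> - 2" for l
    using Umat_eigenprojection[OF graph rot nbrs mu_range E that] by (simp add: A_def P_def W_def)
  have "(sin \<theta>)\<^sup>2 = 1 - (cos \<theta>)\<^sup>2" by (rule sin_squared_eq)
  also have "\<dots> = 4 * \<mu> * (1 - \<mu>)" unfolding theta by (simp add: power2_eq_square algebra_simps)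
  finally have sin_sq: "(sin \<theta>)\<^sup>2 = 4 * \<mu> * (1 - \<mu>)" .
  have cis_unit: "cis t * cnj (cis t) = 1" for t
    by (simp add: cis_cnj cis_mult)
  have cis_re: "cis t + cnj (cis t) = 4 * complex_of_real \<mu> - 2" if "cos t = 2 * \<mu> - 1" for t
    using that by (simp add: complex_eq_iff)
  have "exp (\<i> * complex_of_real \<theta>) = cis \<theta>" "exp (- \<i> * complex_of_real \<theta>) = cis (- \<theta>)"
    by (simp_all add: cis_conv_exp)
  thus ?thesis
    using eigenprojection[OF cis_unit cis_re, of \<theta>] eigenprojection[OF cis_unit cis_re, of "- \<theta>"]
      theta sin_sq
    by (simp add: A_def cis_cnj)
qed

end
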